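(* Let $V$ be a finite set of propositional variables, let $u$ be a satisfiable full Decision-DNNF vertex over $V$, and let $Pr_u$ be the probability distribution on $2^V$ defined by $u$ (see context). Let $v$ be a decision vertex in $\vartheta_u$, and let $X$ be the set of variables labelled on the decision vertices of some directed path from $u$ to a parent of $v$. Then for each $b\in\{0,1\}$, $$Pr_u\big(sym(v)=b \,\big|\, X\big)=p_b(v),$$ where the conditioning on $X$ means conditioning on the variables of $X$ taking the values that correspond to the arcs followed by that path.
   Context: A full Decision-DNNF formula is a rooted directed acyclic graph in which each vertex $v$ carries a label $sym(v)$. A leaf is labelled $\bot$ (representing the constant $0$) or $\top$ (representing $1$). An internal vertex $v$ is either (i) a decision vertex, labelled with a propositional variable $x$, having exactly two children, the low child $ch_0(v)$ and the high child $ch_1(v)$; it represents $(\neg x\wedge\varphi_0)\vee(x\wedge\varphi_1)$ where $\varphi_b$ is the formula represented by $ch_b(v)$, and $x$ occurs in neither $\varphi_0$ nor $\varphi_1$; or (ii) a decomposition vertex, labelled $\wedge$, with a set of children $Ch(v)$ whose rooted sub-DAGs pairwise share no variables; it represents the conjunction of the formulas represented by its children. The arc from a decision vertex $v$ to $ch_b(v)$ is labelled with a number $p_b(v)\ge 0$ (an estimated marginal probability), where $p_0(v)+p_1(v)=1$ and $p_b(v)=0$ iff $sym(ch_b(v))=\bot$. For a vertex $w$, $\vartheta_w$ denotes the sub-DAG rooted at $w$. A vertex is satisfiable if the formula it represents is. For a full Decision-DNNF vertex $w$ over variable set $V$ and an assignment $\omega\in 2^V$, $Pr_w(\omega)$ is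 defined recursively: if $w=\bot$ then $Pr_w(\omega)=0$; if $w=\top$ then $Pr_w(\omega)=2^{-|V|}$; if $w$ is a decision vertex with $sym(w)=x$ and $\omega(x)=b$ then $Pr_w(\omega)=2\,p_b(w)\,Pr_{ch_b(w)}(\omega)$; if $w$ is a decomposition vertex with children $v_1,\dots,v_n$ then $Pr_w(\omega)=2^{(n-1)|V|}\prod_{i=1}^n Pr_{v_i}(\omega)$.
   Formalization: Every vertex of $\vartheta_u$ other than $\bot$ is assumed satisfiable, and when the parent of v is a decision vertex its variable is conditioned on the value of the arc from it to v. Each condition added here is assumed in the paper as well or is needed for the statement above to hold. *)

theory Defs
  imports Complex_Main
begin

text \<open>Decision-DNNF vertices, represented by the rooted sub-DAG they induce
  (unfolded as a tree; paths in the DAG correspond to positions in the tree).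
  A decision vertex  Dec x p0 p1 c0 c1  is labelled with variable x, has low child
  c0 (arc label p0) and high child c1 (arc label p1).\<close>

datatype 'x dd = Bot | Top
  | Dec 'x real real "'x dd" "'x dd"
  | Conj "'x dd list"

fun vars :: "'x dd \<Rightarrow> 'x set" where
  "vars Bot = {}"
| "vars Top = {}"
| "vars (Dec x p0 p1 c0 c1) = insert x (vars c0 \<union> vars c1)"
| "vars (Conj cs) = (\<Union>c\<in>set cs. vars c)"

text \<open>Semantics; an assignment in 2^V is the set of variables set to true.\<close>
fun eval :: "'x set \<Rightarrow> 'x dd \<Rightarrow> bool" where
  "eval \<omega> Bot = False"
| "eval \<omega> Top = True"
| "eval \<omega> (Dec x p0 p1 c0 c1) = (if x \<in> \<omega> then eval \<omega> c1 else eval \<omega> c0)"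
| "eval \<omega> (Conj cs) = (\<forall>c\<in>set cs. eval \<omega> c)"

definition satisfiable :: "'x dd \<Rightarrow> bool" where
  "satisfiable w \<longleftrightarrow> (\<exists>\<omega>. eval \<omega> w)"

fun wf :: "'x dd \<Rightarrow> bool" where
  "wf Bot = True"
| "wf Top = True"
| "wf (Dec x p0 p1 c0 c1) =
     (x \<notin> vars c0 \<and> x \<notin> vars c1 \<and> p0 \<ge> 0 \<and> p1 \<ge> 0 \<and> p0 + p1 = 1
      \<and> (p0 = 0 \<longleftrightarrow> c0 = Bot) \<and> (p1 = 0 \<longleftrightarrow> c1 = Bot) \<and> wf c0 \<and> wf c1)"
| "wf (Conj cs) =
     (distinct cs
      \<and> (\<forall>i<length cs. \<forall>j<length cs. i \<noteq> j \<longrightarrow> vars (cs ! i) \<inter> vars (cs ! j) = {})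
      \<and> (\<forall>c\<in>set cs. wf c))"

fun Pr :: "'x set \<Rightarrow> 'x dd \<Rightarrow> 'x set \<Rightarrow> real" where
  "Pr V Bot \<omega> = 0"
| "Pr V Top \<omega> = 2 powr (- real (card V))"
| "Pr V (Dec x p0 p1 c0 c1) \<omega> =
     (if x \<in> \<omega> then 2 * p1 * Pr V c1 \<omega> else 2 * p0 * Pr V c0 \<omega>)"
| "Pr V (Conj cs) \<omega> =
     2 powr ((real (length cs) - 1) * real (card V)) * prod_list (map (\<lambda>c. Pr V c \<omega>) cs)"

definition prob :: "'x set \<Rightarrow> 'x dd \<Rightarrow> 'x set set \<Rightarrow> real" where
  "prob V u E = (\<Sum>\<omega>\<in>Pow V \<inter> E. Pr V u \<omega>)"

definition cond_prob :: "'x set \<Rightarrow> 'x dd \<Rightarrow> 'x set set \<Rightarrow> 'x set set \<Rightarrow> real" where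
  "cond_prob V u A B = prob V u (A \<inter> B) / prob V u B"

datatype step = Br bool | Ch nat

fun follow :: "'x dd \<Rightarrow> step list \<Rightarrow> 'x dd option" where
  "follow w [] = Some w"
| "follow (Dec x p0 p1 c0 c1) (Br b # ps) = follow (if b then c1 else c0) ps"
| "follow (Conj cs) (Ch i # ps) = (if i < length cs then follow (cs ! i) ps else None)"
| "follow _ _ = None"

fun decs :: "'x dd \<Rightarrow> step list \<Rightarrow> ('x \<times> bool) list" where
  "decs w [] = []"
| "decs (Dec x p0 p1 c0 c1) (Br b # ps) = (x, b) # decs (if b then c1 else c0) ps"
| "decs (Conj cs) (Ch i # ps) = (if i < length cs then decs (cs ! i) ps else [])"
| "decs _ _ = []"

end

theory Submission
  imports Defs "HOL-Library.Disjoint_Sets"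
begin

text \<open>Write \<open>Pr\<^sub>w = density w / 2 ^ card V\<close>. The density of a vertex depends only on the
  variables below it, and functions of disjoint sets of variables are independent under the uniform
  distribution on \<open>2 ^ V\<close>. Averaging against a function of the variables below a path, a
  decision vertex therefore contributes the probability \<open>p\<^sub>b\<close> of the arc taken (the literal
  halves the mean, the factor 2 in the density doubles it), while a decomposition vertex contributes
  the means of the other children, which are 1 because every satisfiable vertex has total mass 1.
  Hence the event described by the path scales all events below \<open>v\<close> by the same positive
  constant, and the conditional probability of \<open>sym(v) = b\<close> is the one at \<open>v\<close> itself,
  namely \<open>p\<^sub>b(v)\<close>.\<close>

definition depends_only_on :: "'x set \<Rightarrow> ('x set \<Rightarrow> 'b) \<Rightarrow> bool" where
  "depends_only_on A f \<longleftrightarrow> (\<forall>\<omega> \<omega>'. \<omega> \<inter> A = \<omega>' \<inter> A \<longrightarrow> f \<omega> = f \<omega>')"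

lemma depends_only_onI: "(\<And>\<omega> \<omega>'. \<omega> \<inter> A = \<omega>' \<inter> A \<Longrightarrow> f \<omega> = f \<omega>') \<Longrightarrow> depends_only_on A f"
  unfolding depends_only_on_def by blast

lemma depends_only_onD: "depends_only_on A f \<Longrightarrow> \<omega> \<inter> A = \<omega>' \<inter> A \<Longrightarrow> f \<omega> = f \<omega>'"
  unfolding depends_only_on_def by blast

lemma depends_only_on_mono: "depends_only_on A f \<Longrightarrow> A \<subseteq> B \<Longrightarrow> depends_only_on B f"
  unfolding depends_only_on_def by (metis Int_absorb2 Int_assoc Int_commute)

lemma depends_only_on_mult:
  assumes "depends_only_on A f" "depends_only_on A g"
  shows "depends_only_on A (\<lambda>\<omega>. f \<omega> * g \<omega>)"
proof (rule depends_only_onI)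
  fix \<omega> \<omega>' assume "\<omega> \<inter> A = \<omega>' \<inter> A"
  then show "f \<omega> * g \<omega> = f \<omega>' * g \<omega>'"
    using depends_only_onD[OF assms(1)] depends_only_onD[OF assms(2)] by metis
qed

lemma depends_only_on_prod:
  assumes "\<And>i. i \<in> S \<Longrightarrow> depends_only_on A (f i)"
  shows "depends_only_on A (\<lambda>\<omega>. \<Prod>i\<in>S. f i \<omega>)"
proof (rule depends_only_onI)
  fix \<omega> \<omega>' assume "\<omega> \<inter> A = \<omega>' \<inter> A"
  then show "(\<Prod>i\<in>S. f i \<omega>) = (\<Prod>i\<in>S. f i \<omega>')"
    using depends_only_onD[OF assms] by (metis prod.cong)
qed

lemma depends_only_on_const: "depends_only_on A (\<lambda>_. c)"
  by (rule depends_only_onI) (rule refl)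

lemma depends_only_on_literal:
  assumes "y \<in> A"
  shows "depends_only_on A (\<lambda>\<omega>. of_bool ((y \<in> \<omega>) = c) :: real)"
proof (rule depends_only_onI)
  fix \<omega> \<omega>' assume "\<omega> \<inter> A = \<omega>' \<inter> A"
  then have "y \<in> \<omega> \<inter> A \<longleftrightarrow> y \<in> \<omega>' \<inter> A" by simp
  then show "of_bool ((y \<in> \<omega>) = c) = (of_bool ((y \<in> \<omega>') = c) :: real)" using assms by simp
qed

definition uniform_mean :: "'x set \<Rightarrow> ('x set \<Rightarrow> real) \<Rightarrow> real" where
  "uniform_mean V f = (\<Sum>\<omega>\<in>Pow V. f \<omega>) / 2 ^ card V"

lemma uniform_mean_const: "finite V \<Longrightarrow> uniform_mean V (\<lambda>_. c) = c"
  by (simp add: uniform_mean_def card_Pow)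

lemma uniform_mean_cmult: "uniform_mean V (\<lambda>\<omega>. c * f \<omega>) = c * uniform_mean V f"
  by (simp add: uniform_mean_def sum_distrib_left)

lemma uniform_mean_add: "uniform_mean V (\<lambda>\<omega>. f \<omega> + g \<omega>) = uniform_mean V f + uniform_mean V g"
  by (simp add: uniform_mean_def sum.distrib add_divide_distrib)

lemma sum_Pow_split:
  assumes "finite V"
  shows "(\<Sum>\<omega>\<in>Pow V. h \<omega>) = (\<Sum>a\<in>Pow (V \<inter> A). \<Sum>b\<in>Pow (V - A). h (a \<union> b))"
proof -
  have "bij_betw (\<lambda>(a, b). a \<union> b) (Pow (V \<inter> A) \<times> Pow (V - A)) (Pow V)"
    by (rule bij_betw_byWitness[where f'="\<lambda>\<omega>. (\<omega> \<inter> A, \<omega> - A)"]) auto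
  then show ?thesis
    by (simp add: sum.cartesian_product sum.reindex_bij_betw[symmetric] case_prod_unfold)
qed

lemma uniform_mean_mult_indep:
  assumes "finite V" "A \<inter> B = {}" "depends_only_on A f" "depends_only_on B g"
  shows "uniform_mean V (\<lambda>\<omega>. f \<omega> * g \<omega>) = uniform_mean V f * uniform_mean V g"
proof -
  have f: "f (a \<union> b) = f a" and g: "g (a \<union> b) = g b"
    if "a \<subseteq> V \<inter> A" "b \<subseteq> V - A" for a b
  proof -
    have "(a \<union> b) \<inter> A = a \<inter> A" "(a \<union> b) \<inter> B = b \<inter> B" using that assms(2) by auto
    then show "f (a \<union> b) = f a" "g (a \<union> b) = g b"
      using depends_only_onD[OF assms(3)] depends_only_onD[OF assms(4)] by blast+
  qed
  have fin: "finite (V \<inter> A)" "finite (V - A)" using assms(1) by auto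
  have "(\<Sum>\<omega>\<in>Pow V. f \<omega> * g \<omega>) = (\<Sum>a\<in>Pow (V \<inter> A). f a) * (\<Sum>b\<in>Pow (V - A). g b)"
    unfolding sum_Pow_split[OF assms(1), of _ A] sum_product by (intro sum.cong refl) (simp add: f g)
  moreover have "(\<Sum>\<omega>\<in>Pow V. f \<omega>) = 2 ^ card (V - A) * (\<Sum>a\<in>Pow (V \<inter> A). f a)"
    unfolding sum_Pow_split[OF assms(1), of _ A] by (simp add: f fin card_Pow sum_distrib_left)
  moreover have "(\<Sum>\<omega>\<in>Pow V. g \<omega>) = 2 ^ card (V \<inter> A) * (\<Sum>b\<in>Pow (V - A). g b)"
    unfolding sum_Pow_split[OF assms(1), of _ A] by (simp add: g fin card_Pow sum_distrib_left del: Pow_Int_eq)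
  ultimately show ?thesis
    unfolding uniform_mean_def card_Int_Diff[OF assms(1), of A] power_add by simp
qed

lemma uniform_mean_prod_indep:
  assumes "finite V" "finite S" "disjoint_family_on A S"
    and "\<And>i. i \<in> S \<Longrightarrow> depends_only_on (A i) (f i)"
  shows "uniform_mean V (\<lambda>\<omega>. \<Prod>i\<in>S. f i \<omega>) = (\<Prod>i\<in>S. uniform_mean V (f i))"
  using assms(2-4)
proof (induction S rule: finite_induct)
  case empty
  then show ?case using assms(1) by (simp add: uniform_mean_const)
next
  case (insert i S)
  have dep_i: "depends_only_on (A i) (f i)"
    and dep_S: "\<And>j. j \<in> S \<Longrightarrow> depends_only_on (A j) (f j)"
    using insert.prems(2) by simp_all
  have disj_S: "disjoint_family_on A S"
    by (rule disjoint_family_on_mono[OF subset_insertI insert.prems(1)])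
  have "A i \<inter> A j = {}" if "j \<in> S" for j
    using disjoint_family_onD[OF insert.prems(1), of i j] that insert.hyps(2) by auto
  then have disj: "A i \<inter> (\<Union>j\<in>S. A j) = {}" by (simp add: Int_UN_distrib)
  have "depends_only_on (\<Union>j\<in>S. A j) (\<lambda>\<omega>. \<Prod>j\<in>S. f j \<omega>)"
  proof (rule depends_only_on_prod)
    fix j assume "j \<in> S"
    then show "depends_only_on (\<Union>j\<in>S. A j) (f j)"
      by (intro depends_only_on_mono[OF dep_S]) auto
  qed
  then have "uniform_mean V (\<lambda>\<omega>. f i \<omega> * (\<Prod>j\<in>S. f j \<omega>))
      = uniform_mean V (f i) * uniform_mean V (\<lambda>\<omega>. \<Prod>j\<in>S. f j \<omega>)"
    by (rule uniform_mean_mult_indep[OF assms(1) disj dep_i])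
  then show ?case by (simp add: prod.insert[OF insert.hyps] insert.IH[OF disj_S dep_S])
qed

lemma uniform_mean_literal:
  assumes "finite V" "y \<in> V"
  shows "uniform_mean V (\<lambda>\<omega>. of_bool ((y \<in> \<omega>) = c)) = 1 / 2"
proof -
  have "V \<inter> {y} = {y}" using assms(2) by simp
  then have Pow_y: "Pow (V \<inter> {y}) = {{}, {y}}" by (simp add: Pow_insert insert_commute)
  have "(\<Sum>\<omega>\<in>Pow V. of_bool ((y \<in> \<omega>) = c) :: real)
      = (\<Sum>b\<in>Pow (V - {y}). of_bool ((y \<in> b) = c) + of_bool ((y \<in> {y} \<union> b) = c))"
    unfolding sum_Pow_split[OF assms(1), of _ "{y}"] Pow_y by (simp add: sum.distrib)
  also have "\<dots> = (\<Sum>b\<in>Pow (V - {y}). 1)"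
    by (rule sum.cong) auto
  also have "\<dots> = 2 ^ card V / 2"
  proof -
    have "card V = Suc (card (V - {y}))" using card_Suc_Diff1[OF assms] by simp
    then show ?thesis using assms(1) by (simp add: card_Pow)
  qed
  finally show ?thesis by (simp add: uniform_mean_def)
qed

lemma uniform_mean_literal_mult:
  assumes "finite V" "y \<in> V" "y \<notin> B" "depends_only_on B g"
  shows "uniform_mean V (\<lambda>\<omega>. of_bool ((y \<in> \<omega>) = c) * g \<omega>) = uniform_mean V g / 2"
proof -
  have "{y} \<inter> B = {}" using assms(3) by simp
  then have "uniform_mean V (\<lambda>\<omega>. of_bool ((y \<in> \<omega>) = c) * g \<omega>)
      = uniform_mean V (\<lambda>\<omega>. of_bool ((y \<in> \<omega>) = c)) * uniform_mean V g"
    by (rule uniform_mean_mult_indep[OF assms(1) _ depends_only_on_literal assms(4)]) simp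
  then show ?thesis unfolding uniform_mean_literal[OF assms(1,2)] by simp
qed

fun density :: "'x dd \<Rightarrow> 'x set \<Rightarrow> real" where
  "density Bot \<omega> = 0"
| "density Top \<omega> = 1"
| "density (Dec x p0 p1 c0 c1) \<omega> =
     (if x \<in> \<omega> then 2 * p1 * density c1 \<omega> else 2 * p0 * density c0 \<omega>)"
| "density (Conj cs) \<omega> = prod_list (map (\<lambda>c. density c \<omega>) cs)"

lemma prod_list_map_divide_const:
  "prod_list (map (\<lambda>x. f x / c) xs) = prod_list (map f xs) / (c :: 'a :: field) ^ length xs"
  by (induction xs) simp_all

lemma Pr_eq_density: "Pr V w \<omega> = density w \<omega> / 2 ^ card V"
proof (induction w)
  case Top
  then show ?case by (simp add: powr_minus powr_realpow divide_inverse)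
next
  case (Conj cs)
  have "(2::real) powr ((real (length cs) - 1) * real (card V)) * 2 ^ card V
      = 2 powr (real (length cs * card V))"
    by (simp add: powr_realpow[symmetric] powr_add[symmetric] algebra_simps)
  also have "\<dots> = 2 ^ (length cs * card V)"
    by (rule powr_realpow) simp
  also have "\<dots> = (2 ^ card V) ^ length cs"
    by (simp add: power_mult mult.commute)
  finally have scale: "(2::real) powr ((real (length cs) - 1) * real (card V)) / (2 ^ card V) ^ length cs
      = 1 / 2 ^ card V"
    by (simp add: field_simps)
  have "prod_list (map (\<lambda>c. Pr V c \<omega>) cs)
      = prod_list (map (\<lambda>c. density c \<omega>) cs) / (2 ^ card V) ^ length cs"
    using Conj.IH by (simp add: prod_list_map_divide_const[symmetric] cong: map_cong)
  then have "Pr V (Conj cs) \<omega> = 2 powr ((real (length cs) - 1) * real (card V)) / (2 ^ card V) ^ length cs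
      * density (Conj cs) \<omega>"
    by simp
  then show ?case unfolding scale by simp
qed simp_all

lemma depends_only_on_density: "depends_only_on (vars w) (density w)"
proof (induction w)
  case (Dec x p0 p1 c0 c1)
  let ?w = "Dec x p0 p1 c0 c1"
  show ?case
  proof (rule depends_only_onI)
    fix \<omega> \<omega>' assume eq: "\<omega> \<inter> vars ?w = \<omega>' \<inter> vars ?w"
    have "density c \<omega> = density c \<omega>'" if "c = c0 \<or> c = c1" for c
    proof -
      have "depends_only_on (vars c) (density c)"
        using that Dec.IH by auto
      then have "depends_only_on (vars ?w) (density c)"
        by (rule depends_only_on_mono) (use that in auto)
      then show ?thesis using eq by (rule depends_only_onD)
    qed
    moreover have "x \<in> \<omega> \<inter> vars ?w \<longleftrightarrow> x \<in> \<omega>' \<inter> vars ?w" using eq by simp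
    ultimately show "density ?w \<omega> = density ?w \<omega>'" by simp
  qed
next
  case (Conj cs)
  show ?case
  proof (rule depends_only_onI)
    fix \<omega> \<omega>' assume eq: "\<omega> \<inter> vars (Conj cs) = \<omega>' \<inter> vars (Conj cs)"
    have "density c \<omega> = density c \<omega>'" if "c \<in> set cs" for c
    proof -
      have "depends_only_on (vars c) (density c)"
        using that Conj.IH by auto
      then have "depends_only_on (vars (Conj cs)) (density c)"
        by (rule depends_only_on_mono) (use that in auto)
      then show ?thesis using eq by (rule depends_only_onD)
    qed
    then show "density (Conj cs) \<omega> = density (Conj cs) \<omega>'"
      by (simp cong: map_cong)
  qed
qed (rule depends_only_onI, simp)+

definition agrees_with :: "('x \<times> bool) list \<Rightarrow> 'x set \<Rightarrow> bool" where
  "agrees_with ds \<omega> \<longleftrightarrow> (\<forall>(y, c) \<in> set ds. (y \<in> \<omega>) = c)"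

lemma agrees_with_Nil [simp]: "agrees_with [] \<omega>"
  by (simp add: agrees_with_def)

lemma agrees_with_Cons [simp]: "agrees_with ((y, c) # ds) \<omega> \<longleftrightarrow> (y \<in> \<omega>) = c \<and> agrees_with ds \<omega>"
  by (simp add: agrees_with_def)

lemma depends_only_on_agrees_with:
  "depends_only_on (fst ` set ds) (\<lambda>\<omega>. of_bool (agrees_with ds \<omega>) :: real)"
proof (rule depends_only_onI)
  fix \<omega> \<omega>' assume eq: "\<omega> \<inter> fst ` set ds = \<omega>' \<inter> fst ` set ds"
  have "(y \<in> \<omega>) = (y \<in> \<omega>')" if "(y, c) \<in> set ds" for y c
  proof -
    have "y \<in> fst ` set ds" using that by force
    then have "y \<in> \<omega> \<inter> fst ` set ds \<longleftrightarrow> y \<in> \<omega>' \<inter> fst ` set ds" using eq by simp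
    then show ?thesis using \<open>y \<in> fst ` set ds\<close> by simp
  qed
  then show "of_bool (agrees_with ds \<omega>) = (of_bool (agrees_with ds \<omega>') :: real)"
    unfolding agrees_with_def by fastforce
qed

lemma fst_decs_subset_vars: "fst ` set (decs w ps) \<subseteq> vars w"
proof (induction w ps rule: decs.induct)
  case (2 x p0 p1 c0 c1 b ps)
  then show ?case by (cases b) auto
next
  case (3 cs i ps)
  show ?case
  proof (cases "i < length cs")
    case True
    have "vars (cs ! i) \<subseteq> vars (Conj cs)" using nth_mem[OF True] by auto
    then show ?thesis using 3 True by simp
  qed simp
qed auto

lemma follow_append: "follow w ps = Some t \<Longrightarrow> follow w (ps @ qs) = follow t qs"
  by (induction w ps rule: follow.induct) (auto split: if_splits)

lemma follow_wf: "follow w ps = Some t \<Longrightarrow> wf w \<Longrightarrow> wf t"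
  by (induction w ps rule: follow.induct) (auto split: if_splits)

lemma follow_vars: "follow w ps = Some t \<Longrightarrow> vars t \<subseteq> vars w"
  by (induction w ps rule: follow.induct) (fastforce split: if_splits)+

lemma follow_Bot: "follow Bot ps = Some t \<Longrightarrow> t = Bot"
  by (cases ps) auto

definition hereditarily_satisfiable :: "'x dd \<Rightarrow> bool" where
  "hereditarily_satisfiable w \<longleftrightarrow> (\<forall>qs t. follow w qs = Some t \<and> t \<noteq> Bot \<longrightarrow> satisfiable t)"

lemma hereditarily_satisfiable_follow:
  "hereditarily_satisfiable w \<Longrightarrow> follow w ps = Some t \<Longrightarrow> hereditarily_satisfiable t"
  unfolding hereditarily_satisfiable_def by (metis follow_append)

lemma hereditarily_satisfiable_Dec:
  assumes "hereditarily_satisfiable (Dec x p0 p1 c0 c1)"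
  shows "hereditarily_satisfiable (if b then c1 else c0)"
  using hereditarily_satisfiable_follow[OF assms, of "[Br b]"] by simp

lemma hereditarily_satisfiable_Conj:
  assumes "hereditarily_satisfiable (Conj cs)" "c \<in> set cs"
  shows "hereditarily_satisfiable c" "c \<noteq> Bot"
proof -
  obtain i where "i < length cs" "c = cs ! i" using assms(2) by (metis in_set_conv_nth)
  then show "hereditarily_satisfiable c"
    using hereditarily_satisfiable_follow[OF assms(1), of "[Ch i]"] by simp
  have "satisfiable (Conj cs)"
    using assms(1) unfolding hereditarily_satisfiable_def by (metis follow.simps(1) dd.distinct(5))
  then show "c \<noteq> Bot" using assms(2) unfolding satisfiable_def by force
qed

lemma wf_Conj_disjoint_vars:
  assumes "wf (Conj cs)"
  shows "disjoint_family_on vars (set cs)"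
  unfolding disjoint_family_on_def
proof (intro ballI impI)
  fix c c' assume "c \<in> set cs" "c' \<in> set cs" "c \<noteq> c'"
  then obtain i j where "i < length cs" "j < length cs" "c = cs ! i" "c' = cs ! j" "i \<noteq> j"
    by (metis in_set_conv_nth)
  then show "vars c \<inter> vars c' = {}" using assms by simp
qed

lemma uniform_mean_Dec_branch:
  assumes "finite V" "wf (Dec x p0 p1 c0 c1)" "vars (Dec x p0 p1 c0 c1) \<subseteq> V"
    and "depends_only_on (vars (if b then c1 else c0)) g"
  shows "uniform_mean V (\<lambda>\<omega>. of_bool ((x \<in> \<omega>) = b) * g \<omega> * density (Dec x p0 p1 c0 c1) \<omega>)
       = (if b then p1 else p0) * uniform_mean V (\<lambda>\<omega>. g \<omega> * density (if b then c1 else c0) \<omega>)"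
proof -
  define c q where "c = (if b then c1 else c0)" and "q = (if b then p1 else p0)"
  have "x \<in> V" "x \<notin> vars c" using assms(2,3) unfolding c_def by auto
  have "depends_only_on (vars c) (\<lambda>\<omega>. 2 * q * (g \<omega> * density c \<omega>))"
    using assms(4)[folded c_def]
    by (intro depends_only_on_mult depends_only_on_const depends_only_on_density)
  then have "uniform_mean V (\<lambda>\<omega>. of_bool ((x \<in> \<omega>) = b) * (2 * q * (g \<omega> * density c \<omega>)))
      = uniform_mean V (\<lambda>\<omega>. 2 * q * (g \<omega> * density c \<omega>)) / 2"
    by (rule uniform_mean_literal_mult[OF assms(1) \<open>x \<in> V\<close> \<open>x \<notin> vars c\<close>])
  also have "\<dots> = q * uniform_mean V (\<lambda>\<omega>. g \<omega> * density c \<omega>)"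
    by (simp add: uniform_mean_cmult)
  finally have mean_eq: "uniform_mean V (\<lambda>\<omega>. of_bool ((x \<in> \<omega>) = b) * (2 * q * (g \<omega> * density c \<omega>)))
      = q * uniform_mean V (\<lambda>\<omega>. g \<omega> * density c \<omega>)" .
  have pointwise: "of_bool ((x \<in> \<omega>) = b) * g \<omega> * density (Dec x p0 p1 c0 c1) \<omega>
      = of_bool ((x \<in> \<omega>) = b) * (2 * q * (g \<omega> * density c \<omega>))" for \<omega>
    unfolding c_def q_def by (cases b; cases "x \<in> \<omega>") simp_all
  show ?thesis unfolding c_def[symmetric] q_def[symmetric] pointwise by (rule mean_eq)
qed

lemma uniform_mean_Dec_literal:
  assumes "finite V" "wf (Dec x p0 p1 c0 c1)" "vars (Dec x p0 p1 c0 c1) \<subseteq> V"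
    and "\<And>c. c \<in> {c0, c1} \<Longrightarrow> c \<noteq> Bot \<Longrightarrow> uniform_mean V (density c) = 1"
  shows "uniform_mean V (\<lambda>\<omega>. of_bool ((x \<in> \<omega>) = b) * density (Dec x p0 p1 c0 c1) \<omega>)
       = (if b then p1 else p0)"
proof -
  define c q where "c = (if b then c1 else c0)" and "q = (if b then p1 else p0)"
  have "q * uniform_mean V (density c) = q"
  proof (cases "c = Bot")
    case True
    then show ?thesis using assms(2) unfolding c_def q_def by (cases b) auto
  next
    case False
    then show ?thesis using assms(4) unfolding c_def by (cases b) auto
  qed
  then show ?thesis
    using uniform_mean_Dec_branch[OF assms(1-3) depends_only_on_const[of _ "1 :: real"]]
    unfolding c_def q_def by simp
qed

lemma uniform_mean_density:
  assumes "finite V"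
  shows "wf w \<Longrightarrow> vars w \<subseteq> V \<Longrightarrow> hereditarily_satisfiable w \<Longrightarrow> w \<noteq> Bot \<Longrightarrow>
    uniform_mean V (density w) = 1"
proof (induction w)
  case Top
  then show ?case using assms by (simp add: uniform_mean_const)
next
  case (Dec x p0 p1 c0 c1)
  have children: "uniform_mean V (density c) = 1" if "c \<in> {c0, c1}" "c \<noteq> Bot" for c
    using that Dec.IH Dec.prems hereditarily_satisfiable_Dec[OF Dec.prems(3), of True]
      hereditarily_satisfiable_Dec[OF Dec.prems(3), of False] by auto
  let ?D = "Dec x p0 p1 c0 c1"
  have split: "density ?D \<omega>
      = of_bool ((x \<in> \<omega>) = True) * density ?D \<omega> + of_bool ((x \<in> \<omega>) = False) * density ?D \<omega>"
    for \<omega> by (cases "x \<in> \<omega>") (simp_all del: density.simps)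
  have "uniform_mean V (density ?D)
      = uniform_mean V (\<lambda>\<omega>. of_bool ((x \<in> \<omega>) = True) * density ?D \<omega>)
        + uniform_mean V (\<lambda>\<omega>. of_bool ((x \<in> \<omega>) = False) * density ?D \<omega>)"
    unfolding uniform_mean_add[symmetric] split[symmetric] by (rule refl)
  also have "\<dots> = p1 + p0"
    using uniform_mean_Dec_literal[OF assms Dec.prems(1,2) children, where b=True]
      uniform_mean_Dec_literal[OF assms Dec.prems(1,2) children, where b=False]
    by (simp del: density.simps)
  finally have "uniform_mean V (density ?D) = p1 + p0" .
  then show ?case using Dec.prems(1) by (simp del: density.simps)
next
  case (Conj cs)
  have "\<And>c. c \<in> set cs \<Longrightarrow> uniform_mean V (density c) = 1"
    using Conj.IH Conj.prems hereditarily_satisfiable_Conj[OF Conj.prems(3)] by auto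
  moreover have "density (Conj cs) \<omega> = (\<Prod>c\<in>set cs. density c \<omega>)" for \<omega>
    using Conj.prems(1) by (simp add: prod.distinct_set_conv_list)
  ultimately show ?case
    using uniform_mean_prod_indep[OF assms finite_set wf_Conj_disjoint_vars[OF Conj.prems(1)]
        depends_only_on_density]
    by simp
qed simp

lemma uniform_mean_prod_density_children:
  assumes "finite V" "wf (Conj cs)" "vars (Conj cs) \<subseteq> V" "hereditarily_satisfiable (Conj cs)"
    and "S \<subseteq> set cs"
  shows "uniform_mean V (\<lambda>\<omega>. \<Prod>c\<in>S. density c \<omega>) = 1"
proof -
  have "uniform_mean V (density c) = 1" if "c \<in> S" for c
  proof (rule uniform_mean_density[OF assms(1)])
    have "c \<in> set cs" using that assms(5) by blast
    then show "wf c" "vars c \<subseteq> V" "hereditarily_satisfiable c" "c \<noteq> Bot"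
      using assms(2,3) hereditarily_satisfiable_Conj[OF assms(4)] by auto
  qed
  moreover have "disjoint_family_on vars S"
    by (rule disjoint_family_on_mono[OF assms(5) wf_Conj_disjoint_vars[OF assms(2)]])
  moreover have "finite S" using assms(5) finite_subset by blast
  ultimately show ?thesis
    by (simp add: uniform_mean_prod_indep[OF assms(1) _ _ depends_only_on_density])
qed

lemma uniform_mean_Conj_child:
  assumes "finite V" "wf (Conj cs)" "vars (Conj cs) \<subseteq> V" "hereditarily_satisfiable (Conj cs)"
    and "d \<in> set cs" "depends_only_on (vars d) g"
  shows "uniform_mean V (\<lambda>\<omega>. g \<omega> * density (Conj cs) \<omega>) = uniform_mean V (\<lambda>\<omega>. g \<omega> * density d \<omega>)"
proof -
  define others where "others = set cs - {d}"
  have "density (Conj cs) \<omega> = density d \<omega> * (\<Prod>c\<in>others. density c \<omega>)" for \<omega>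
  proof -
    have "density (Conj cs) \<omega> = (\<Prod>c\<in>set cs. density c \<omega>)"
      using assms(2) by (simp add: prod.distinct_set_conv_list)
    also have "\<dots> = density d \<omega> * (\<Prod>c\<in>others. density c \<omega>)"
      unfolding others_def by (rule prod.remove[OF finite_set assms(5)])
    finally show ?thesis .
  qed
  then have "uniform_mean V (\<lambda>\<omega>. g \<omega> * density (Conj cs) \<omega>)
      = uniform_mean V (\<lambda>\<omega>. (g \<omega> * density d \<omega>) * (\<Prod>c\<in>others. density c \<omega>))"
    by (simp only: mult.assoc)
  also have "\<dots> = uniform_mean V (\<lambda>\<omega>. g \<omega> * density d \<omega>)
      * uniform_mean V (\<lambda>\<omega>. \<Prod>c\<in>others. density c \<omega>)"
  proof (rule uniform_mean_mult_indep[OF assms(1)])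
    have "vars d \<inter> vars c = {}" if "c \<in> others" for c
      using disjoint_family_onD[OF wf_Conj_disjoint_vars[OF assms(2)] assms(5), of c] that
      unfolding others_def by auto
    then show "vars d \<inter> (\<Union>c\<in>others. vars c) = {}" by (simp add: Int_UN_distrib)
    show "depends_only_on (vars d) (\<lambda>\<omega>. g \<omega> * density d \<omega>)"
      by (rule depends_only_on_mult[OF assms(6) depends_only_on_density])
    show "depends_only_on (\<Union>c\<in>others. vars c) (\<lambda>\<omega>. \<Prod>c\<in>others. density c \<omega>)"
    proof (rule depends_only_on_prod)
      fix c assume "c \<in> others"
      then have "vars c \<subseteq> (\<Union>c\<in>others. vars c)" by blast
      then show "depends_only_on (\<Union>c\<in>others. vars c) (density c)"
        by (rule depends_only_on_mono[OF depends_only_on_density])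
    qed
  qed
  also have "uniform_mean V (\<lambda>\<omega>. \<Prod>c\<in>others. density c \<omega>) = 1"
    using uniform_mean_prod_density_children[OF assms(1-4)] unfolding others_def by blast
  finally show ?thesis by simp
qed

lemma depends_only_on_agrees_with_decs:
  fixes g :: "'x set \<Rightarrow> real"
  assumes "follow w ps = Some t" "depends_only_on (vars t) g"
  shows "depends_only_on (vars w) (\<lambda>\<omega>. of_bool (agrees_with (decs w ps) \<omega>) * g \<omega>)"
  using depends_only_on_mono[OF depends_only_on_agrees_with[of "decs w ps"] fst_decs_subset_vars]
    depends_only_on_mono[OF assms(2) follow_vars[OF assms(1)]]
  by (rule depends_only_on_mult)

lemma uniform_mean_agrees_with_Dec:
  fixes g :: "'x set \<Rightarrow> real"
  assumes "finite V" "wf (Dec x p0 p1 c0 c1)" "vars (Dec x p0 p1 c0 c1) \<subseteq> V"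
    and "follow (if b then c1 else c0) ps = Some t" "depends_only_on (vars t) g"
  shows "uniform_mean V (\<lambda>\<omega>. of_bool (agrees_with (decs (Dec x p0 p1 c0 c1) (Br b # ps)) \<omega>) * g \<omega>
           * density (Dec x p0 p1 c0 c1) \<omega>)
       = (if b then p1 else p0) * uniform_mean V (\<lambda>\<omega>. of_bool (agrees_with (decs (if b then c1 else c0) ps) \<omega>)
           * g \<omega> * density (if b then c1 else c0) \<omega>)"
proof -
  let ?D = "Dec x p0 p1 c0 c1" and ?c = "if b then c1 else c0"
  let ?g = "\<lambda>\<omega>. of_bool (agrees_with (decs ?c ps) \<omega>) * g \<omega>"
  have "of_bool (agrees_with (decs ?D (Br b # ps)) \<omega>) * g \<omega> * density ?D \<omega>
      = of_bool ((x \<in> \<omega>) = b) * ?g \<omega> * density ?D \<omega>" for \<omega>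
    by (simp del: density.simps)
  then show ?thesis
    using uniform_mean_Dec_branch[OF assms(1-3) depends_only_on_agrees_with_decs[OF assms(4,5)]]
    by (simp only: mult.assoc)
qed

lemma uniform_mean_agrees_with_Conj:
  fixes g :: "'x set \<Rightarrow> real"
  assumes "finite V" "wf (Conj cs)" "vars (Conj cs) \<subseteq> V" "hereditarily_satisfiable (Conj cs)"
    and "i < length cs" "follow (cs ! i) ps = Some t" "depends_only_on (vars t) g"
  shows "uniform_mean V (\<lambda>\<omega>. of_bool (agrees_with (decs (Conj cs) (Ch i # ps)) \<omega>) * g \<omega>
           * density (Conj cs) \<omega>)
       = uniform_mean V (\<lambda>\<omega>. of_bool (agrees_with (decs (cs ! i) ps) \<omega>) * g \<omega> * density (cs ! i) \<omega>)"
  using uniform_mean_Conj_child[OF assms(1-4) nth_mem[OF assms(5)]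
      depends_only_on_agrees_with_decs[OF assms(6,7)]] assms(5)
  by (simp del: density.simps add: mult.assoc)

text \<open>The constant \<open>K\<close> is the product of the arc probabilities along the path.\<close>

lemma uniform_mean_path:
  assumes "finite V"
  shows "follow w ps = Some t \<Longrightarrow> wf w \<Longrightarrow> vars w \<subseteq> V \<Longrightarrow> hereditarily_satisfiable w \<Longrightarrow>
    t \<noteq> Bot \<Longrightarrow> \<exists>K>0. \<forall>g. depends_only_on (vars t) g \<longrightarrow>
      uniform_mean V (\<lambda>\<omega>. of_bool (agrees_with (decs w ps) \<omega>) * g \<omega> * density w \<omega>)
      = K * uniform_mean V (\<lambda>\<omega>. g \<omega> * density t \<omega>)"
proof (induction w ps rule: follow.induct)
  case (1 w)
  then show ?case by (intro exI[of _ 1]) simp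
next
  case (2 x p0 p1 c0 c1 b ps)
  define c q where "c = (if b then c1 else c0)" and "q = (if b then p1 else p0)"
  have path: "follow c ps = Some t" using "2.prems"(1) unfolding c_def by simp
  have "wf c" "vars c \<subseteq> V" "hereditarily_satisfiable c"
    using "2.prems"(2-4) hereditarily_satisfiable_Dec[OF "2.prems"(4)] unfolding c_def by auto
  from "2.IH"[folded c_def, OF path this "2.prems"(5)]
  obtain K where "K > 0" and IH: "\<forall>g. depends_only_on (vars t) g \<longrightarrow>
      uniform_mean V (\<lambda>\<omega>. of_bool (agrees_with (decs c ps) \<omega>) * g \<omega> * density c \<omega>)
      = K * uniform_mean V (\<lambda>\<omega>. g \<omega> * density t \<omega>)"
    by blast
  have "c \<noteq> Bot" using path "2.prems"(5) follow_Bot by blast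
  then have "q > 0" using "2.prems"(2) unfolding c_def q_def by (cases b) auto
  then show ?case
    using \<open>K > 0\<close> IH uniform_mean_agrees_with_Dec[OF assms "2.prems"(2,3) path[unfolded c_def],
        folded c_def q_def]
    by (intro exI[of _ "q * K"]) (auto simp del: density.simps)
next
  case (3 cs i ps)
  have i: "i < length cs" using "3.prems"(1) by (simp split: if_splits)
  have path: "follow (cs ! i) ps = Some t" using "3.prems"(1) i by simp
  have "wf (cs ! i)" "vars (cs ! i) \<subseteq> V" "hereditarily_satisfiable (cs ! i)"
    using "3.prems"(2-4) nth_mem[OF i] hereditarily_satisfiable_Conj[OF "3.prems"(4)] by auto
  then show ?case
    using "3.IH"[OF i path] "3.prems"(5) uniform_mean_agrees_with_Conj[OF assms "3.prems"(2-4) i path]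
    by (auto simp del: density.simps)
qed simp_all

lemma prob_eq_uniform_mean:
  assumes "finite V"
  shows "prob V u S = uniform_mean V (\<lambda>\<omega>. of_bool (\<omega> \<in> S) * density u \<omega>)"
proof -
  have "prob V u S = (\<Sum>\<omega>\<in>Pow V. if \<omega> \<in> S then Pr V u \<omega> else 0)"
    using assms by (simp add: prob_def sum.inter_restrict)
  also have "\<dots> = (\<Sum>\<omega>\<in>Pow V. of_bool (\<omega> \<in> S) * density u \<omega> / 2 ^ card V)"
    by (rule sum.cong) (simp_all add: Pr_eq_density)
  finally show ?thesis by (simp add: uniform_mean_def sum_divide_distrib)
qed

lemma prob_path_event:
  assumes "finite V" "follow u ps = Some t" "wf u" "vars u \<subseteq> V" "hereditarily_satisfiable u"
    and "t \<noteq> Bot"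
  shows "\<exists>K>0. \<forall>B. depends_only_on (vars t) (\<lambda>\<omega>. of_bool (\<omega> \<in> B) :: real) \<longrightarrow>
    prob V u (B \<inter> {\<omega>. agrees_with (decs u ps) \<omega>})
    = K * uniform_mean V (\<lambda>\<omega>. of_bool (\<omega> \<in> B) * density t \<omega>)"
proof -
  obtain K where "K > 0" and path: "\<forall>g. depends_only_on (vars t) g \<longrightarrow>
      uniform_mean V (\<lambda>\<omega>. of_bool (agrees_with (decs u ps) \<omega>) * g \<omega> * density u \<omega>)
      = K * uniform_mean V (\<lambda>\<omega>. g \<omega> * density t \<omega>)"
    using uniform_mean_path[OF assms] by blast
  have "prob V u (B \<inter> {\<omega>. agrees_with (decs u ps) \<omega>})
      = uniform_mean V (\<lambda>\<omega>. of_bool (agrees_with (decs u ps) \<omega>) * of_bool (\<omega> \<in> B) * density u \<omega>)"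
    for B
    unfolding prob_eq_uniform_mean[OF assms(1)] by (simp add: of_bool_conj mult_ac Int_def)
  then show ?thesis using \<open>K > 0\<close> path by auto
qed

theorem proposition1:
  fixes V :: "'x set" and u :: "'x dd" and ps :: "step list"
    and x :: 'x and p0 p1 :: real and c0 c1 :: "'x dd" and b :: bool
  assumes "finite V"
    and "vars u \<subseteq> V"
    and "wf u"
    and "satisfiable u"
    and "\<forall>qs w. follow u qs = Some w \<and> w \<noteq> Bot \<longrightarrow> satisfiable w"
    and "follow u ps = Some (Dec x p0 p1 c0 c1)"
    and "ps \<noteq> []"
  shows "cond_prob V u {\<omega>. (x \<in> \<omega>) = b}
           {\<omega>. \<forall>(y, c) \<in> set (decs u ps). (y \<in> \<omega>) = c}
         = (if b then p1 else p0)"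
proof -
  let ?t = "Dec x p0 p1 c0 c1" and ?E = "{\<omega>. agrees_with (decs u ps) \<omega>}"
  have hs: "hereditarily_satisfiable u" using assms(5) unfolding hereditarily_satisfiable_def .
  have t: "wf ?t" "vars ?t \<subseteq> V" "hereditarily_satisfiable ?t"
    using follow_wf[OF assms(6,3)] follow_vars[OF assms(6)] assms(2)
      hereditarily_satisfiable_follow[OF hs assms(6)] by auto
  obtain K where "K > 0" and event: "\<And>B. depends_only_on (vars ?t) (\<lambda>\<omega>. of_bool (\<omega> \<in> B) :: real) \<Longrightarrow>
      prob V u (B \<inter> ?E) = K * uniform_mean V (\<lambda>\<omega>. of_bool (\<omega> \<in> B) * density ?t \<omega>)"
    using prob_path_event[OF assms(1,6,3,2) hs] by blast
  have children: "uniform_mean V (density c) = 1" if "c \<in> {c0, c1}" "c \<noteq> Bot" for c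
    using that t hereditarily_satisfiable_Dec[OF t(3), of True]
      hereditarily_satisfiable_Dec[OF t(3), of False]
    by (intro uniform_mean_density[OF assms(1)]) auto
  have "prob V u ({\<omega>. (x \<in> \<omega>) = b} \<inter> ?E) = K * (if b then p1 else p0)"
    using event[of "{\<omega>. (x \<in> \<omega>) = b}"] depends_only_on_literal[of x "vars ?t" b]
      uniform_mean_Dec_literal[OF assms(1) t(1,2) children]
    by (simp del: density.simps)
  moreover have "prob V u ?E = K"
    using event[of UNIV] uniform_mean_density[OF assms(1) t]
    by (simp add: depends_only_on_const del: density.simps)
  ultimately show ?thesis
    using \<open>K > 0\<close> unfolding cond_prob_def agrees_with_def by simp
qed

end
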